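(* Fix the parameters $S_1,\dots,S_{\mathcal K}$, $\lambda_1,\dots,\lambda_{\mathcal K}$ of the storage model in the context. Suppose that the linear system \[ \sum_{j=1}^{\kappa_i}\alpha_{ij}=\lambda_i\ (i=1,\dots,\mathcal K),\qquad \sum_{i=1}^{\mathcal K}\sum_{j=1}^{\kappa_i}\alpha_{ij}\,\delta_{\ell,s^i_j}=\tfrac1n\ (\ell=1,\dots,n) \] has no non-negative solution $(\alpha_{ij})$. Then for any routing policy $P$, the shape process $\tilde X(t)$ with routing policy $P$ is transient.
   Context: Storage model: there are $n$ nodes $\{1,\dots,n\}$ and $\mathcal K\ge1$ non-empty neighborhoods $S_1,\dots,S_{\mathcal K}\subset\{1,\dots,n\}$ with $\bigcup_i S_i=\{1,\dots,n\}$; $\kappa_i=|S_i|$ and $S_i=\{s^i_1,\dots,s^i_{\kappa_i}\}$. Items arrive at $S_i$ as independent Poisson processes with rates $\lambda_i>0$, $\sum_{i=1}^{\mathcal K}\lambda_i=1$. Let $\Lambda_i=\{p\in\mathbb R^{\kappa_i}:p_j\ge0,\sum_j p_j=1\}$. A routing policy is a map $P:\mathbb N^n\to\Lambda_1\times\dots\times\Lambda_{\mathcal K}$ with $P(x+c\mathbf 1)=P(x)$ for all integers $c$; an item arriving at $S_i$ when the configuration is $x$ is stored at node $s^i_j$ with probability $p^{(i)}_j(x)$, independently for each arrival. $X(t)$ is the vector of node loads, $M(t)=\frac1n\sum_iX_i(t)$, the shape is $\tilde X(t)=X(t)-M(t)\mathbf 1$, and $\tilde X^e(m)$ is the shape observed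 at successive arrival moments. With $\tau=\inf\{m>0:\tilde X^e(m)=0\}$, the process is called transient if $\mathbf P(\tau=\infty\mid\tilde X^e(0)=0)>0$. $\delta_{\ell,m}$ is the Kronecker delta. *)

theory Defs
  imports Complex_Main
begin

text \<open>Nodes are the elements of a finite type 'n (so n = CARD('n)).
  Neighbourhoods are indexed by i < K; neighbourhood i is the list S i = [s_1,...,s_kappa_i]
  of distinct nodes. A routing policy is
  p :: ('n => nat) => nat => nat => real with p x i j the probability p^(i)_j(x)
  (list index j < length (S i)).\<close>

definition storage_model :: "nat \<Rightarrow> (nat \<Rightarrow> 'n::finite list) \<Rightarrow> (nat \<Rightarrow> real) \<Rightarrow> bool" where
  "storage_model K S lam \<longleftrightarrow> K \<ge> 1
     \<and> (\<forall>i<K. S i \<noteq> [] \<and> distinct (S i))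
     \<and> (\<Union>i<K. set (S i)) = UNIV
     \<and> (\<forall>i<K. lam i > 0) \<and> (\<Sum>i<K. lam i) = 1"

definition routing_policy :: "nat \<Rightarrow> (nat \<Rightarrow> 'n::finite list) \<Rightarrow> (('n \<Rightarrow> nat) \<Rightarrow> nat \<Rightarrow> nat \<Rightarrow> real) \<Rightarrow> bool" where
  "routing_policy K S p \<longleftrightarrow>
     (\<forall>x. \<forall>i<K. (\<forall>j<length (S i). p x i j \<ge> 0) \<and> (\<Sum>j<length (S i). p x i j) = 1)
     \<and> (\<forall>x (c::nat). \<forall>i<K. \<forall>j<length (S i). p (\<lambda>l. x l + c) i j = p x i j)"

definition step_prob :: "nat \<Rightarrow> (nat \<Rightarrow> 'n::finite list) \<Rightarrow> (nat \<Rightarrow> real)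
    \<Rightarrow> (('n \<Rightarrow> nat) \<Rightarrow> nat \<Rightarrow> nat \<Rightarrow> real) \<Rightarrow> ('n \<Rightarrow> nat) \<Rightarrow> 'n \<Rightarrow> real" where
  "step_prob K S lam p x l =
     (\<Sum>i<K. lam i * (\<Sum>j<length (S i). p x i j * (if S i ! j = l then 1 else 0)))"

definition add_item :: "('n \<Rightarrow> nat) \<Rightarrow> 'n \<Rightarrow> ('n \<Rightarrow> nat)" where
  "add_item x l = x(l := x l + 1)"

definition config_after :: "('n \<Rightarrow> nat) \<Rightarrow> 'n list \<Rightarrow> ('n \<Rightarrow> nat)" where
  "config_after x ls = foldl add_item x ls"

fun path_prob :: "nat \<Rightarrow> (nat \<Rightarrow> 'n::finite list) \<Rightarrow> (nat \<Rightarrow> real)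
    \<Rightarrow> (('n \<Rightarrow> nat) \<Rightarrow> nat \<Rightarrow> nat \<Rightarrow> real) \<Rightarrow> ('n \<Rightarrow> nat) \<Rightarrow> 'n list \<Rightarrow> real" where
  "path_prob K S lam p x [] = 1"
| "path_prob K S lam p x (l # ls) = step_prob K S lam p x l * path_prob K S lam p (add_item x l) ls"

definition shape_zero :: "('n \<Rightarrow> nat) \<Rightarrow> bool" where
  "shape_zero x \<longleftrightarrow> (\<forall>a b. x a = x b)"

text \<open>P(tau = m | X^e(0) = x): first return of the shape to 0 at arrival m > 0.\<close>
definition first_return_prob :: "nat \<Rightarrow> (nat \<Rightarrow> 'n::finite list) \<Rightarrow> (nat \<Rightarrow> real)
    \<Rightarrow> (('n \<Rightarrow> nat) \<Rightarrow> nat \<Rightarrow> nat \<Rightarrow> real) \<Rightarrow> ('n \<Rightarrow> nat) \<Rightarrow> nat \<Rightarrow> real" where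
  "first_return_prob K S lam p x m =
     (\<Sum>ls \<in> {ls. length ls = m \<and> m > 0 \<and> shape_zero (config_after x ls)
                 \<and> (\<forall>k. 0 < k \<and> k < m \<longrightarrow> \<not> shape_zero (config_after x (take k ls)))}.
        path_prob K S lam p x ls)"

text \<open>Transience: P(tau = infinity | shape 0 at start) > 0, i.e. P(tau < infinity) < 1.\<close>
definition transient :: "nat \<Rightarrow> (nat \<Rightarrow> 'n::finite list) \<Rightarrow> (nat \<Rightarrow> real)
    \<Rightarrow> (('n \<Rightarrow> nat) \<Rightarrow> nat \<Rightarrow> nat \<Rightarrow> real) \<Rightarrow> bool" where
  "transient K S lam p \<longleftrightarrow>
     (\<forall>x. shape_zero x \<longrightarrow>
        summable (first_return_prob K S lam p x) \<and> suminf (first_return_prob K S lam p x) < 1)"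

end

theory Submission
  imports Defs "HOL-Analysis.Analysis"
begin

text \<open>Under any routing policy the law of the node receiving the next item is a vector of the
  polytope \<open>D = \<Sum>\<^sub>i \<lambda>\<^sub>i conv{e\<^sub>s | s \<in> S\<^sub>i}\<close>, and the hypothesis says exactly that the uniform vector
  \<open>u\<close> lies outside \<open>D\<close>. A hyperplane separating \<open>u\<close> from the compact convex set \<open>D\<close> yields
  weights \<open>g\<close> with \<open>\<Sum>\<^sub>l g\<^sub>l = 0\<close> such that \<open>Y(x) = \<Sum>\<^sub>l g\<^sub>l x\<^sub>l\<close>, which vanishes whenever the shape
  is zero, increases in expectation by at least some \<open>\<delta> > 0\<close> at every arrival. For small
  \<open>\<theta> > 0\<close> the process \<open>exp(-\<theta> Y)\<close> is then a supermartingale contracting by a factor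
  \<open>\<rho> < 1\<close> per step, so starting from a zero shape the probability of ever returning to a
  zero shape is at most \<open>\<rho>\<close>.\<close>

section \<open>Hitting probabilities of random walks\<close>

definition stochastic :: "('s \<Rightarrow> 'l::finite \<Rightarrow> real) \<Rightarrow> bool" where
  "stochastic P \<longleftrightarrow> (\<forall>x l. 0 \<le> P x l) \<and> (\<forall>x. (\<Sum>l\<in>UNIV. P x l) = 1)"

text \<open>Probability that the chain moving from \<open>x\<close> to \<open>mv x l\<close> with probability \<open>P x l\<close> is in
  \<open>T\<close> at one of the times \<open>1, \<dots>, N\<close>.\<close>

fun hit_within :: "('s \<Rightarrow> 'l::finite \<Rightarrow> real) \<Rightarrow> ('s \<Rightarrow> 'l \<Rightarrow> 's) \<Rightarrow> ('s \<Rightarrow> bool) \<Rightarrow> nat \<Rightarrow> 's \<Rightarrow> real" where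
  "hit_within P mv T 0 x = 0"
| "hit_within P mv T (Suc N) x =
     (\<Sum>l\<in>UNIV. P x l * (if T (mv x l) then 1 else hit_within P mv T N (mv x l)))"

lemma hit_within_le_one:
  assumes "stochastic P"
  shows "hit_within P mv T N x \<le> 1"
proof (induction N arbitrary: x)
  case (Suc N)
  have "hit_within P mv T (Suc N) x \<le> (\<Sum>l\<in>UNIV. P x l)"
    unfolding hit_within.simps
    using assms Suc.IH by (intro sum_mono mult_left_le) (auto simp: stochastic_def)
  then show ?case using assms by (simp add: stochastic_def)
qed simp

lemma hit_within_mono:
  assumes "stochastic P" and "\<And>x. T x \<Longrightarrow> T' x"
  shows "hit_within P mv T N x \<le> hit_within P mv T' N x"
proof (induction N arbitrary: x)
  case (Suc N)
  show ?case
    unfolding hit_within.simps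
    using assms Suc.IH hit_within_le_one[OF assms(1)]
    by (intro sum_mono mult_left_mono) (auto simp: stochastic_def)
qed simp

lemma hit_within_le_exp:
  assumes "stochastic P" and "\<theta> \<ge> 0" and "\<rho> \<le> 1"
    and drift: "\<And>x. (\<Sum>l\<in>UNIV. P x l * exp (- \<theta> * (Y (mv x l) - Y x))) \<le> \<rho>"
    and "Y x \<ge> 0"
  shows "hit_within P mv (\<lambda>x. Y x \<le> 0) N x \<le> \<rho> * exp (- \<theta> * Y x)"
  using \<open>Y x \<ge> 0\<close>
proof (induction N arbitrary: x)
  case 0
  have "0 \<le> (\<Sum>l\<in>UNIV. P x l * exp (- \<theta> * (Y (mv x l) - Y x)))"
    using assms(1) by (auto simp: stochastic_def intro!: sum_nonneg)
  with drift[of x] show ?case by simp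
next
  case (Suc N)
  have "hit_within P mv (\<lambda>x. Y x \<le> 0) (Suc N) x \<le> (\<Sum>l\<in>UNIV. P x l * exp (- \<theta> * Y (mv x l)))"
    unfolding hit_within.simps
  proof (intro sum_mono mult_left_mono)
    fix l
    show "(if Y (mv x l) \<le> 0 then 1 else hit_within P mv (\<lambda>x. Y x \<le> 0) N (mv x l))
        \<le> exp (- \<theta> * Y (mv x l))"
    proof (cases "Y (mv x l) \<le> 0")
      case True
      then show ?thesis using \<open>\<theta> \<ge> 0\<close> by (simp add: mult_nonneg_nonpos)
    next
      case False
      then have "hit_within P mv (\<lambda>x. Y x \<le> 0) N (mv x l) \<le> \<rho> * exp (- \<theta> * Y (mv x l))"
        by (intro Suc.IH) simp
      also have "\<dots> \<le> exp (- \<theta> * Y (mv x l))"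
        using mult_right_mono[OF \<open>\<rho> \<le> 1\<close>, of "exp (- \<theta> * Y (mv x l))"] by simp
      finally show ?thesis using False by simp
    qed
  qed (use assms(1) in \<open>auto simp: stochastic_def\<close>)
  also have "\<dots> = exp (- \<theta> * Y x) * (\<Sum>l\<in>UNIV. P x l * exp (- \<theta> * (Y (mv x l) - Y x)))"
    by (simp add: sum_distrib_left algebra_simps flip: exp_add)
  also have "\<dots> \<le> \<rho> * exp (- \<theta> * Y x)"
    using drift[of x] by (simp add: mult.commute)
  finally show ?case .
qed

lemma exp_le_quadratic:
  fixes t :: real
  assumes "\<bar>t\<bar> \<le> 1"
  shows "exp t \<le> 1 + t + t\<^sup>2"
proof (cases "t \<ge> 0")
  case True
  then show ?thesis using exp_bound assms by auto
next
  case False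
  define s where "s = - t"
  have s: "0 < s" "s \<le> 1" using False assms by (auto simp: s_def)
  have "1 \<le> (1 + s) * (1 - s + s\<^sup>2)"
    using s by (simp add: algebra_simps power2_eq_square power3_eq_cube)
  also have "\<dots> \<le> exp s * (1 - s + s\<^sup>2)"
    using s by (intro mult_right_mono exp_ge_add_one_self) (auto simp: power2_eq_square)
  finally have "exp (- s) \<le> 1 - s + s\<^sup>2"
    by (simp add: exp_minus divide_simps mult.commute)
  then show ?thesis by (simp add: s_def)
qed

lemma uniform_exp_moment_lt_one:
  fixes P :: "'s \<Rightarrow> 'l::finite \<Rightarrow> real" and g :: "'l \<Rightarrow> real"
  assumes P: "stochastic P" and "\<delta> > 0" and drift: "\<And>x. \<delta> \<le> (\<Sum>l\<in>UNIV. P x l * g l)"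
  obtains \<theta> \<rho> where "\<theta> > 0" "\<rho> < 1" "\<And>x. (\<Sum>l\<in>UNIV. P x l * exp (- \<theta> * g l)) \<le> \<rho>"
proof
  define R where "R = 1 + (\<Sum>l\<in>UNIV. \<bar>g l\<bar>)"
  have g_le_R: "\<bar>g l\<bar> \<le> R" for l
    using member_le_sum[of l UNIV "\<lambda>l. \<bar>g l\<bar>"] by (simp add: R_def)
  have "R \<ge> 1" by (simp add: R_def sum_nonneg)
  \<comment> \<open>small enough for \<open>|\<theta> g l| \<le> 1\<close> and for the quadratic error to cost at most half the drift\<close>
  define \<theta> where "\<theta> = min (1 / R) (\<delta> / (2 * R\<^sup>2))"
  show "\<theta> > 0" using \<open>R \<ge> 1\<close> \<open>\<delta> > 0\<close> by (simp add: \<theta>_def)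
  have "\<theta> * R \<le> 1" using \<open>R \<ge> 1\<close> by (simp add: \<theta>_def min_def field_simps)
  have "\<theta> * R\<^sup>2 \<le> \<delta> / 2"
    using \<open>R \<ge> 1\<close> by (simp add: \<theta>_def min_def field_simps)
  show "1 - \<theta> * \<delta> / 2 < 1" using \<open>\<theta> > 0\<close> \<open>\<delta> > 0\<close> by simp
  fix x
  have exp_le: "exp (- \<theta> * g l) \<le> 1 - \<theta> * g l + \<theta> * (\<theta> * R\<^sup>2)" for l
  proof -
    have "\<bar>- \<theta> * g l\<bar> \<le> \<theta> * R"
      using g_le_R[of l] \<open>\<theta> > 0\<close> by (simp add: abs_mult mult_left_mono)
    then have "exp (- \<theta> * g l) \<le> 1 + (- \<theta> * g l) + (- \<theta> * g l)\<^sup>2"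
      using \<open>\<theta> * R \<le> 1\<close> by (intro exp_le_quadratic) simp
    also have "(- \<theta> * g l)\<^sup>2 \<le> \<theta> * (\<theta> * R\<^sup>2)"
      using power_mono[OF g_le_R[of l], of 2]
      by (simp add: power_mult_distrib power2_eq_square mult_left_mono \<open>\<theta> > 0\<close> less_imp_le)
    finally show ?thesis by simp
  qed
  have "(\<Sum>l\<in>UNIV. P x l * exp (- \<theta> * g l))
      \<le> (\<Sum>l\<in>UNIV. P x l * (1 - \<theta> * g l + \<theta> * (\<theta> * R\<^sup>2)))"
    using P by (intro sum_mono mult_left_mono exp_le) (auto simp: stochastic_def)
  also have "\<dots> = (1 + \<theta> * (\<theta> * R\<^sup>2)) * (\<Sum>l\<in>UNIV. P x l) - \<theta> * (\<Sum>l\<in>UNIV. P x l * g l)"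
    by (simp add: sum_distrib_left sum_distrib_right sum_subtractf sum.distrib algebra_simps)
  also have "\<dots> = 1 + \<theta> * (\<theta> * R\<^sup>2) - \<theta> * (\<Sum>l\<in>UNIV. P x l * g l)"
    using P by (simp add: stochastic_def)
  also have "\<dots> \<le> 1 + \<theta> * (\<delta> / 2) - \<theta> * \<delta>"
    using \<open>\<theta> * R\<^sup>2 \<le> \<delta> / 2\<close> drift[of x] \<open>\<theta> > 0\<close>
    by (intro diff_mono add_left_mono mult_left_mono) auto
  finally show "(\<Sum>l\<in>UNIV. P x l * exp (- \<theta> * g l)) \<le> 1 - \<theta> * \<delta> / 2"
    by (simp add: mult.commute)
qed

section \<open>The polytope of achievable drifts\<close>

lemma convex_hull_finite_image:
  assumes "finite J"
  shows "convex hull (f ` J) = {\<Sum>j\<in>J. q j *\<^sub>R f j | q. (\<forall>j\<in>J. 0 \<le> q j) \<and> sum q J = 1}"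
    (is "_ = ?R")
proof -
  have "f ` J = (\<Union>j\<in>J. {f j})" by auto
  then have "convex hull (f ` J) = {\<Sum>j\<in>J. q j *\<^sub>R s j | q s.
      (\<forall>j\<in>J. 0 \<le> q j) \<and> sum q J = 1 \<and> (\<forall>j\<in>J. s j \<in> {f j})}"
    using assms by (simp add: convex_hull_finite_union)
  also have "\<dots> = ?R"
  proof (intro subset_antisym subsetI)
    fix v assume "v \<in> {\<Sum>j\<in>J. q j *\<^sub>R s j | q s.
      (\<forall>j\<in>J. 0 \<le> q j) \<and> sum q J = 1 \<and> (\<forall>j\<in>J. s j \<in> {f j})}"
    then obtain q s where "v = (\<Sum>j\<in>J. q j *\<^sub>R s j)" "\<forall>j\<in>J. 0 \<le> q j" "sum q J = 1"
      "\<forall>j\<in>J. s j = f j" by auto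
    then show "v \<in> ?R" by (auto intro!: exI[of _ q] sum.cong)
  qed auto
  finally show ?thesis .
qed

definition drift_polytope :: "nat \<Rightarrow> (nat \<Rightarrow> 'n::finite list) \<Rightarrow> (nat \<Rightarrow> real) \<Rightarrow> (real^'n) set" where
  "drift_polytope K S lam = (\<Sum>i<K. convex hull ((\<lambda>j. axis (S i ! j) (lam i)) ` {..<length (S i)}))"

lemma compact_drift_polytope: "compact (drift_polytope K S lam)"
  unfolding drift_polytope_def convex_hull_set_sum[symmetric]
  by (intro compact_convex_hull finite_imp_compact finite_set_sum) auto

lemma convex_drift_polytope: "convex (drift_polytope K S lam)"
  unfolding drift_polytope_def by (intro convex_set_sum convex_convex_hull)

lemma mem_drift_polytope_iff:
  "y \<in> drift_polytope K S lam \<longleftrightarrow>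
     (\<exists>q. (\<forall>i<K. \<forall>j<length (S i). 0 \<le> q i j) \<and> (\<forall>i<K. (\<Sum>j<length (S i). q i j) = 1)
        \<and> y = (\<chi> l. \<Sum>i<K. lam i * (\<Sum>j<length (S i). q i j * (if S i ! j = l then 1 else 0))))"
    (is "_ \<longleftrightarrow> (\<exists>q. ?weights q \<and> ?sums q \<and> y = ?vec q)")
proof -
  let ?v = "\<lambda>q i. \<Sum>j<length (S i). q i j *\<^sub>R axis (S i ! j) (lam i)"
  have vec: "(\<Sum>i<K. ?v q i) = ?vec q" for q
    by (auto simp: vec_eq_iff sum_component axis_def sum_distrib_left mult_ac intro!: sum.cong)
  have hull_mem: "s \<in> convex hull ((\<lambda>j. axis (S i ! j) (lam i)) ` {..<length (S i)}) \<longleftrightarrow>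
      (\<exists>qi. s = (\<Sum>j<length (S i). qi j *\<^sub>R axis (S i ! j) (lam i))
         \<and> (\<forall>j<length (S i). 0 \<le> qi j) \<and> (\<Sum>j<length (S i). qi j) = 1)" for s i
    by (simp add: convex_hull_finite_image Ball_def)
  have "y \<in> drift_polytope K S lam \<longleftrightarrow>
      (\<exists>s. y = (\<Sum>i<K. s i) \<and> (\<forall>i\<in>{..<K}. \<exists>qi. s i = (\<Sum>j<length (S i). qi j *\<^sub>R axis (S i ! j) (lam i))
         \<and> (\<forall>j<length (S i). 0 \<le> qi j) \<and> (\<Sum>j<length (S i). qi j) = 1))"
    by (simp add: drift_polytope_def set_sum_alt hull_mem)
  also have "\<dots> \<longleftrightarrow> (\<exists>q. ?weights q \<and> ?sums q \<and> y = (\<Sum>i<K. ?v q i))"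
  proof
    assume "\<exists>s. y = (\<Sum>i<K. s i) \<and> (\<forall>i\<in>{..<K}. \<exists>qi. s i = ?v (\<lambda>_. qi) i
         \<and> (\<forall>j<length (S i). 0 \<le> qi j) \<and> (\<Sum>j<length (S i). qi j) = 1)"
    then obtain s where y: "y = (\<Sum>i<K. s i)" and choices: "\<forall>i\<in>{..<K}. \<exists>qi. s i = ?v (\<lambda>_. qi) i
         \<and> (\<forall>j<length (S i). 0 \<le> qi j) \<and> (\<Sum>j<length (S i). qi j) = 1"
      by blast
    from bchoice[OF choices] obtain q where "\<forall>i\<in>{..<K}. s i = ?v q i
         \<and> (\<forall>j<length (S i). 0 \<le> q i j) \<and> (\<Sum>j<length (S i). q i j) = 1" ..
    with y show "\<exists>q. ?weights q \<and> ?sums q \<and> y = (\<Sum>i<K. ?v q i)"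
      by (intro exI[of _ q]) auto
  next
    assume "\<exists>q. ?weights q \<and> ?sums q \<and> y = (\<Sum>i<K. ?v q i)"
    then obtain q where "?weights q" "?sums q" "y = (\<Sum>i<K. ?v q i)" by blast
    then show "\<exists>s. y = (\<Sum>i<K. s i) \<and> (\<forall>i\<in>{..<K}. \<exists>qi. s i = ?v (\<lambda>_. qi) i
         \<and> (\<forall>j<length (S i). 0 \<le> qi j) \<and> (\<Sum>j<length (S i). qi j) = 1)"
      by (intro exI[of _ "?v q"]) auto
  qed
  finally show ?thesis unfolding vec .
qed

lemma drift_polytope_imp_allocation:
  assumes "y \<in> drift_polytope K S lam" and "\<forall>i<K. 0 \<le> lam i"
  shows "\<exists>\<alpha>. (\<forall>i<K. \<forall>j<length (S i). 0 \<le> \<alpha> i j) \<and> (\<forall>i<K. (\<Sum>j<length (S i). \<alpha> i j) = lam i)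
     \<and> (\<forall>l. (\<Sum>i<K. \<Sum>j<length (S i). \<alpha> i j * (if l = S i ! j then 1 else 0)) = y $ l)"
proof -
  obtain q where q: "\<forall>i<K. \<forall>j<length (S i). 0 \<le> q i j" "\<forall>i<K. (\<Sum>j<length (S i). q i j) = 1"
    and y: "y = (\<chi> l. \<Sum>i<K. lam i * (\<Sum>j<length (S i). q i j * (if S i ! j = l then 1 else 0)))"
    using assms(1) unfolding mem_drift_polytope_iff by blast
  show ?thesis
  proof (intro exI[of _ "\<lambda>i j. lam i * q i j"] conjI)
    show "\<forall>i<K. \<forall>j<length (S i). 0 \<le> lam i * q i j" using q(1) assms(2) by simp
    show "\<forall>i<K. (\<Sum>j<length (S i). lam i * q i j) = lam i" using q(2) by (simp flip: sum_distrib_left)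
    show "\<forall>l. (\<Sum>i<K. \<Sum>j<length (S i). lam i * q i j * (if l = S i ! j then 1 else 0)) = y $ l"
      by (simp add: y sum_distrib_left mult_ac eq_commute[of _ "S _ ! _"])
  qed
qed

lemma separate_from_balanced:
  fixes D :: "(real^'n::finite) set"
  assumes "compact D" and "convex D" and "(\<chi> l. 1 / real CARD('n)) \<notin> D"
  obtains g \<delta> where "sum g UNIV = 0" "\<delta> > 0"
    "\<And>d. d \<in> D \<Longrightarrow> (\<Sum>l\<in>UNIV. d $ l) = 1 \<Longrightarrow> \<delta> \<le> (\<Sum>l\<in>UNIV. d $ l * g l)"
proof -
  obtain a b where below: "inner a (\<chi> l. 1 / real CARD('n)) < b" and above: "\<forall>d\<in>D. b < inner a d"
    using separating_hyperplane_closed_point[OF \<open>convex D\<close> compact_imp_closed] assms by blast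
  define c where "c = (\<Sum>l\<in>UNIV. a $ l) / real CARD('n)"
  have "c < b" using below by (simp add: c_def inner_vec_def sum_divide_distrib)
  show thesis
  proof
    show "(\<Sum>l\<in>UNIV. a $ l - c) = 0" by (simp add: c_def sum_subtractf)
    show "b - c > 0" using \<open>c < b\<close> by simp
    fix d assume "d \<in> D" and "(\<Sum>l\<in>UNIV. d $ l) = 1"
    then have "(\<Sum>l\<in>UNIV. d $ l * (a $ l - c)) = inner a d - c"
      by (simp add: inner_vec_def algebra_simps sum_subtractf flip: sum_distrib_left)
    with above \<open>d \<in> D\<close> show "b - c \<le> (\<Sum>l\<in>UNIV. d $ l * (a $ l - c))" by force
  qed
qed

lemma stochastic_step_prob:
  assumes "storage_model K S lam" and "routing_policy K S p"
  shows "stochastic (step_prob K S lam p)"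
  unfolding stochastic_def
proof (intro conjI allI)
  fix x l
  show "0 \<le> step_prob K S lam p x l"
    using assms unfolding storage_model_def routing_policy_def step_prob_def
    by (auto intro!: sum_nonneg mult_nonneg_nonneg simp: less_imp_le)
next
  fix x
  have node_sum: "(\<Sum>l\<in>UNIV. \<Sum>j<length (S i). p x i j * (if S i ! j = l then 1 else 0))
      = (\<Sum>j<length (S i). p x i j)" for i
    by (subst sum.swap) (simp flip: sum_distrib_left)
  have "(\<Sum>l\<in>UNIV. step_prob K S lam p x l) = (\<Sum>i<K. lam i * (\<Sum>j<length (S i). p x i j))"
    unfolding step_prob_def by (subst sum.swap) (simp add: node_sum flip: sum_distrib_left)
  also have "\<dots> = 1"
    using assms unfolding storage_model_def routing_policy_def by simp
  finally show "(\<Sum>l\<in>UNIV. step_prob K S lam p x l) = 1" .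
qed

lemma step_prob_in_drift_polytope:
  assumes "routing_policy K S p"
  shows "(\<chi> l. step_prob K S lam p x l) \<in> drift_polytope K S lam"
  unfolding mem_drift_polytope_iff
  by (intro exI[of _ "p x"]) (use assms in \<open>auto simp: routing_policy_def step_prob_def vec_eq_iff\<close>)

section \<open>First returns of the shape\<close>

lemma sum_lists_length_Suc:
  fixes f :: "'a::finite list \<Rightarrow> real"
  shows "(\<Sum>ls\<in>{ls. length ls = Suc m \<and> P ls}. f ls)
       = (\<Sum>l\<in>UNIV. \<Sum>ls\<in>{ls. length ls = m \<and> P (l # ls)}. f (l # ls))"
proof -
  have fin: "finite {ls::'a list. length ls = m \<and> Q ls}" for Q
    by (rule finite_subset[OF _ finite_lists_length_eq[OF finite_class.finite_UNIV, of m]]) auto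
  have eq: "{ls. length ls = Suc m \<and> P ls}
      = (\<lambda>(l, ls). l # ls) ` (SIGMA l:UNIV. {ls. length ls = m \<and> P (l # ls)})"
    by (auto simp: image_iff length_Suc_conv)
  have inj: "inj_on (\<lambda>(l, ls). l # ls) (SIGMA l:UNIV. {ls::'a list. length ls = m \<and> P (l # ls)})"
    by (auto simp: inj_on_def)
  show ?thesis
    unfolding eq sum.reindex[OF inj]
    by (subst sum.Sigma) (auto simp: fin split_def)
qed

definition first_return_paths :: "('n::finite \<Rightarrow> nat) \<Rightarrow> nat \<Rightarrow> 'n list set" where
  "first_return_paths x m = {ls. length ls = m \<and> m > 0 \<and> shape_zero (config_after x ls)
     \<and> (\<forall>k. 0 < k \<and> k < m \<longrightarrow> \<not> shape_zero (config_after x (take k ls)))}"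

lemma first_return_prob_eq_sum_paths:
  "first_return_prob K S lam p x m = (\<Sum>ls\<in>first_return_paths x m. path_prob K S lam p x ls)"
  unfolding first_return_prob_def first_return_paths_def ..

lemma first_return_prob_0 [simp]: "first_return_prob K S lam p x 0 = 0"
  by (simp add: first_return_prob_eq_sum_paths first_return_paths_def)

lemma config_after_Cons: "config_after x (l # ls) = config_after (add_item x l) ls"
  by (simp add: config_after_def)

lemma Cons_mem_first_return_paths_iff:
  "l # ls \<in> first_return_paths x (Suc m) \<longleftrightarrow>
     (if shape_zero (add_item x l) then ls = [] \<and> m = 0
      else ls \<in> first_return_paths (add_item x l) m)"
proof -
  have shift: "(\<forall>k. 0 < k \<and> k < Suc m \<longrightarrow> Q k) \<longleftrightarrow> (\<forall>k<m. Q (Suc k))" for Q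
    by (auto simp: gr0_conv_Suc)
  have split_zero: "(\<forall>k<m. R k) \<longleftrightarrow> (0 < m \<longrightarrow> R 0) \<and> (\<forall>k. 0 < k \<and> k < m \<longrightarrow> R k)" for R
    by (metis not_gr0)
  show ?thesis
    unfolding first_return_paths_def shift split_zero[of "\<lambda>k. \<not> shape_zero (config_after _ (take (Suc k) _))"]
    by (auto simp: config_after_Cons config_after_def)
qed

lemma first_return_prob_Suc:
  "first_return_prob K S lam p x (Suc m)
   = (\<Sum>l\<in>UNIV. step_prob K S lam p x l *
        (if shape_zero (add_item x l) then (if m = 0 then 1 else 0)
         else first_return_prob K S lam p (add_item x l) m))" (is "_ = ?rhs")
proof -
  have "first_return_prob K S lam p x (Suc m)
      = (\<Sum>ls\<in>{ls. length ls = Suc m \<and> ls \<in> first_return_paths x (Suc m)}. path_prob K S lam p x ls)"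
    unfolding first_return_prob_eq_sum_paths by (rule sum.cong) (auto simp: first_return_paths_def)
  also have "\<dots> = (\<Sum>l\<in>UNIV. \<Sum>ls\<in>{ls. length ls = m \<and> l # ls \<in> first_return_paths x (Suc m)}.
                      path_prob K S lam p x (l # ls))"
    by (rule sum_lists_length_Suc)
  also have "\<dots> = ?rhs"
  proof (rule sum.cong)
    fix l
    have "{ls. length ls = m \<and> l # ls \<in> first_return_paths x (Suc m)}
        = (if shape_zero (add_item x l) then (if m = 0 then {[]} else {})
           else first_return_paths (add_item x l) m)"
      unfolding Cons_mem_first_return_paths_iff by (auto simp: first_return_paths_def)
    then show "(\<Sum>ls\<in>{ls. length ls = m \<and> l # ls \<in> first_return_paths x (Suc m)}. path_prob K S lam p x (l # ls))
        = step_prob K S lam p x l * (if shape_zero (add_item x l) then (if m = 0 then 1 else 0)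
            else first_return_prob K S lam p (add_item x l) m)"
      by (simp add: first_return_prob_eq_sum_paths sum_distrib_left)
  qed simp
  finally show ?thesis .
qed

lemma sum_first_return_prob_eq_hit_within:
  "(\<Sum>m<Suc N. first_return_prob K S lam p x m)
   = hit_within (step_prob K S lam p) add_item shape_zero N x"
proof (induction N arbitrary: x)
  case (Suc N)
  have "(\<Sum>m<Suc (Suc N). first_return_prob K S lam p x m)
      = (\<Sum>m<Suc N. first_return_prob K S lam p x (Suc m))"
    by (subst sum.lessThan_Suc_shift) simp
  also have "\<dots> = (\<Sum>l\<in>UNIV. step_prob K S lam p x l *
      (\<Sum>m<Suc N. if shape_zero (add_item x l) then (if m = 0 then 1 else 0)
                   else first_return_prob K S lam p (add_item x l) m))"
    unfolding first_return_prob_Suc sum_distrib_left by (rule sum.swap)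
  also have "\<dots> = hit_within (step_prob K S lam p) add_item shape_zero (Suc N) x"
    unfolding hit_within.simps
    by (intro sum.cong refl) (auto simp: Suc.IH[symmetric] simp del: sum.lessThan_Suc)
  finally show ?case .
qed simp

lemma path_prob_nonneg:
  "stochastic (step_prob K S lam p) \<Longrightarrow> 0 \<le> path_prob K S lam p x ls"
  by (induction ls arbitrary: x) (auto simp: stochastic_def)

definition linear_load :: "('n::finite \<Rightarrow> real) \<Rightarrow> ('n \<Rightarrow> nat) \<Rightarrow> real" where
  "linear_load g x = (\<Sum>l\<in>UNIV. g l * real (x l))"

lemma linear_load_add_item: "linear_load g (add_item x l) = linear_load g x + g l"
proof -
  have "linear_load g (add_item x l) = (\<Sum>l'\<in>UNIV. g l' * real (x l') + (if l' = l then g l else 0))"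
    unfolding linear_load_def add_item_def by (intro sum.cong) (auto simp: distrib_left)
  then show ?thesis by (simp add: sum.distrib linear_load_def)
qed

lemma linear_load_shape_zero:
  assumes "sum g UNIV = 0" and "shape_zero x"
  shows "linear_load g x = 0"
proof -
  obtain v where "\<And>l. x l = v" using \<open>shape_zero x\<close> by (auto simp: shape_zero_def)
  then have "linear_load g x = sum g UNIV * real v" by (simp add: linear_load_def sum_distrib_right)
  with assms(1) show ?thesis by simp
qed

lemma transient_if_exp_moment_lt_one:
  assumes P: "stochastic (step_prob K S lam p)"
    and g: "sum g UNIV = 0" and "\<theta> \<ge> 0" and "\<rho> < 1"
    and moment: "\<And>x. (\<Sum>l\<in>UNIV. step_prob K S lam p x l * exp (- \<theta> * g l)) \<le> \<rho>"
  shows "transient K S lam p"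
  unfolding transient_def
proof (intro allI impI)
  fix x :: "'a \<Rightarrow> nat"
  assume "shape_zero x"
  let ?f = "first_return_prob K S lam p x"
  have nonneg: "0 \<le> ?f m" for m
    unfolding first_return_prob_eq_sum_paths by (intro sum_nonneg path_prob_nonneg[OF P])
  have partial_sums: "(\<Sum>m<n. ?f m) \<le> \<rho>" for n
  proof -
    have "(\<Sum>m<n. ?f m) \<le> (\<Sum>m<Suc n. ?f m)"
      using nonneg by simp
    also have "\<dots> = hit_within (step_prob K S lam p) add_item shape_zero n x"
      by (rule sum_first_return_prob_eq_hit_within)
    also have "\<dots> \<le> hit_within (step_prob K S lam p) add_item (\<lambda>y. linear_load g y \<le> 0) n x"
      using P by (rule hit_within_mono) (simp add: linear_load_shape_zero[OF g])
    also have "\<dots> \<le> \<rho> * exp (- \<theta> * linear_load g x)"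
      using P \<open>\<theta> \<ge> 0\<close> \<open>\<rho> < 1\<close> moment
      by (intro hit_within_le_exp) (auto simp: linear_load_add_item linear_load_shape_zero[OF g \<open>shape_zero x\<close>])
    finally show ?thesis
      by (simp add: linear_load_shape_zero[OF g \<open>shape_zero x\<close>])
  qed
  have "summable ?f"
    by (rule summableI_nonneg_bounded[OF nonneg partial_sums])
  moreover have "suminf ?f \<le> \<rho>"
    by (rule suminf_le_const[OF \<open>summable ?f\<close> partial_sums])
  ultimately show "summable ?f \<and> suminf ?f < 1"
    using \<open>\<rho> < 1\<close> by simp
qed

theorem corollary2p1:
  fixes K :: nat and S :: "nat \<Rightarrow> 'n::finite list" and lam :: "nat \<Rightarrow> real"
  assumes "storage_model K S lam"
    and "\<not> (\<exists>\<alpha> :: nat \<Rightarrow> nat \<Rightarrow> real.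
              (\<forall>i<K. \<forall>j<length (S i). \<alpha> i j \<ge> 0)
            \<and> (\<forall>i<K. (\<Sum>j<length (S i). \<alpha> i j) = lam i)
            \<and> (\<forall>l::'n. (\<Sum>i<K. \<Sum>j<length (S i). \<alpha> i j * (if l = S i ! j then 1 else 0))
                        = 1 / real (card (UNIV :: 'n set))))"
  shows "\<forall>p. routing_policy K S p \<longrightarrow> transient K S lam p"
proof (intro allI impI)
  fix p assume routing: "routing_policy K S p"
  have P: "stochastic (step_prob K S lam p)"
    using assms(1) routing by (rule stochastic_step_prob)
  have "\<forall>i<K. 0 \<le> lam i"
    using assms(1) by (simp add: storage_model_def less_imp_le)
  then have balanced_notin: "(\<chi> l. 1 / real CARD('n)) \<notin> drift_polytope K S lam"
    using drift_polytope_imp_allocation[of "\<chi> l. 1 / real CARD('n)" K S lam] assms(2) by (simp, blast)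
  obtain g \<delta> where g: "sum g UNIV = 0" and "\<delta> > 0"
    and separated: "\<And>d. d \<in> drift_polytope K S lam \<Longrightarrow> (\<Sum>l\<in>UNIV. d $ l) = 1
                      \<Longrightarrow> \<delta> \<le> (\<Sum>l\<in>UNIV. d $ l * g l)"
    using separate_from_balanced[OF compact_drift_polytope convex_drift_polytope balanced_notin] by blast
  have drift: "\<delta> \<le> (\<Sum>l\<in>UNIV. step_prob K S lam p x l * g l)" for x
    using separated[OF step_prob_in_drift_polytope[OF routing]] P by (simp add: stochastic_def)
  obtain \<theta> \<rho> where "\<theta> > 0" "\<rho> < 1"
    and moment: "\<And>x. (\<Sum>l\<in>UNIV. step_prob K S lam p x l * exp (- \<theta> * g l)) \<le> \<rho>"
    using uniform_exp_moment_lt_one[OF P \<open>\<delta> > 0\<close> drift] by blast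
  show "transient K S lam p"
    using transient_if_exp_moment_lt_one[OF P g less_imp_le[OF \<open>\<theta> > 0\<close>] \<open>\<rho> < 1\<close> moment] .
qed

end
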